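(* Let $1\le r^{\star}\le r<n$, let $u_{0},u_{1},\dots,u_{n-1}$ be an orthonormal basis of $\mathbb{R}^{n}$, let $q=r-r^{\star}+1$ and $\kappa=1+2\sqrt{q}$. Let $\mathbf{H}$ be a real symmetric $n^{2}\times n^{2}$ matrix with $I\preceq\mathbf{H}\preceq\kappa I$ satisfying $$\mathbf{H}\,\mathrm{vec}\Big(\sqrt{q}u_{0}u_{0}^{T}+\sum_{i=1}^{q}u_{i}u_{i}^{T}\Big)=\kappa\,\mathrm{vec}\Big(\sqrt{q}u_{0}u_{0}^{T}+\sum_{i=1}^{q}u_{i}u_{i}^{T}\Big),$$ $$\mathbf{H}\,\mathrm{vec}\Big(\sqrt{q}u_{0}u_{0}^{T}-\sum_{i=1}^{q}u_{i}u_{i}^{T}\Big)=\mathrm{vec}\Big(\sqrt{q}u_{0}u_{0}^{T}-\sum_{i=1}^{q}u_{i}u_{i}^{T}\Big),$$ $$\mathbf{H}\,\mathrm{vec}(u_{0}u_{i}^{T}+u_{i}u_{0}^{T})=\kappa\,\mathrm{vec}(u_{0}u_{i}^{T}+u_{i}u_{0}^{T})\quad\text{for all }i\in\{1,\dots,r\}.$$ Let $\xi=\sqrt{1+\sqrt{q}}$, $\delta=1/(1+1/\sqrt{q})$, $Z=\xi\,[u_{0},u_{q+1},u_{q+2},\dots,u_{r}]\in\mathbb{R}^{n\times r^{\star}}$ and $X=[u_{1},\dots,u_{q},\xi u_{q+1},\dots,\xi u_{r}]\in\mathbb{R}^{n\times r}$. Then $(\delta,(1-\delta)\mathbf{H})$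 is a feasible point of the problem defining $\delta_{\mathrm{ub}}(X,Z)$; that is, $\mathbf{H}'=(1-\delta)\mathbf{H}$ satisfies $\mathbf{J}^{T}\mathbf{H}'\mathbf{e}=0$, $2I_{r}\otimes\mathrm{mat}(\mathbf{H}'\mathbf{e})+\mathbf{J}^{T}\mathbf{H}'\mathbf{J}\succeq0$, and $(1-\delta)I\preceq\mathbf{H}'\preceq(1+\delta)I$.
   Context: $\mathrm{vec}$ is column-stacking vectorization and $\mathrm{mat}$ its inverse; $\otimes$ is the Kronecker product with $\mathrm{vec}(AXB^{T})=(B\otimes A)\mathrm{vec}(X)$. For $X\in\mathbb{R}^{n\times r}$, $Z\in\mathbb{R}^{n\times r^{\star}}$: $\mathbf{e}=\mathrm{vec}(XX^{T}-ZZ^{T})$ and $\mathbf{J}\in\mathbb{R}^{n^{2}\times nr}$ satisfies $\mathbf{J}\,\mathrm{vec}(Y)=\mathrm{vec}(XY^{T}+YX^{T})$ for all $Y\in\mathbb{R}^{n\times r}$. $\delta_{\mathrm{ub}}(X,Z)$ is the minimum of $\delta$ over pairs $(\delta,\mathbf{H}')$ with $\mathbf{H}'$ real symmetric $n^{2}\times n^{2}$ satisfying $\mathbf{J}^{T}\mathbf{H}'\mathbf{e}=0$, $2I_{r}\otimes\mathrm{mat}(\mathbf{H}'\mathbf{e})+\mathbf{J}^{T}\mathbf{H}'\mathbf{J}\succeq0$, and $(1-\delta)I\preceq\mathbf{H}'\preceq(1+\delta)I$. *)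

theory Defs
  imports Complex_Main "Jordan_Normal_Form.Matrix"
begin

text \<open>Column-stacking vectorization: entry (i,j) of an m x k matrix goes to index i + j*m.\<close>
definition vecm :: "real mat \<Rightarrow> real vec" where
  "vecm A = vec (dim_row A * dim_col A) (\<lambda>t. A $$ (t mod dim_row A, t div dim_row A))"

definition matv :: "nat \<Rightarrow> nat \<Rightarrow> real vec \<Rightarrow> real mat" where
  "matv m k v = mat m k (\<lambda>(i,j). v $ (i + j * m))"

definition kron :: "real mat \<Rightarrow> real mat \<Rightarrow> real mat" where
  "kron A B = mat (dim_row A * dim_row B) (dim_col A * dim_col B)
     (\<lambda>(i,j). A $$ (i div dim_row B, j div dim_col B) * B $$ (i mod dim_row B, j mod dim_col B))"

definition psd :: "real mat \<Rightarrow> bool" where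
  "psd A \<longleftrightarrow> A \<in> carrier_mat (dim_row A) (dim_row A) \<and>
     (\<forall>x \<in> carrier_vec (dim_row A). 0 \<le> x \<bullet> (A *\<^sub>v x))"

definition loewner_le :: "real mat \<Rightarrow> real mat \<Rightarrow> bool" where
  "loewner_le A B \<longleftrightarrow> psd (B - A)"

end

theory Submission
  imports Defs
begin

(* Let e = vec (X X^T - Z Z^T) = vec (sum_{k=1..q} u_k u_k^T - xi^2 u_0 u_0^T). Because
   xi^2 = 1 + sqrt q, e is a combination of the first two given eigenvectors of H (eigenvalues
   kappa and 1) in which everything but the u_0 u_0^T part cancels: H e = - kappa vec (u_0 u_0^T).
   Since X^T u_0 = 0, this vector is orthogonal to the range of J: the first-order condition.

   For the second-order condition, evaluate the quadratic form at vec Y. The Kronecker term gives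
   - 2 (1 - delta) kappa |Y^T u_0|^2 and the J-term gives (1 - delta) s^T H s with
   s = vec (X Y^T + Y X^T). Put v = X Y^T u_0 and p = vec (u_0 v^T + v u_0^T). By the third
   eigen-relation p is a kappa-eigenvector of H, and s^T p = p^T p = 2 |v|^2, so expanding
   (s - p)^T H (s - p) >= 0 gives s^T H s >= 2 kappa |v|^2 >= 2 kappa |Y^T u_0|^2; the last step
   holds because the columns of X are orthogonal with norms 1 or xi >= 1.

   The Loewner bounds are I <= H <= kappa I scaled by 1 - delta, since (1 - delta) kappa = 1 + delta. *)


lemma sum_lessThan_mult_mod_div:
  fixes g :: "nat \<Rightarrow> nat \<Rightarrow> 'a :: comm_monoid_add"
  shows "(\<Sum>t<m*k. g (t mod m) (t div m)) = (\<Sum>i<m. \<Sum>j<k. g i j)"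
proof (induction k)
  case 0
  then show ?case by simp
next
  case (Suc k)
  have split: "{..<m * Suc k} = {..<m*k} \<union> {m*k..<m*k+m}" by auto
  have "(\<Sum>t<m * Suc k. g (t mod m) (t div m))
      = (\<Sum>t<m*k. g (t mod m) (t div m)) + (\<Sum>t\<in>{m*k..<m*k+m}. g (t mod m) (t div m))"
    unfolding split by (subst sum.union_disjoint) auto
  also have "(\<Sum>t\<in>{m*k..<m*k+m}. g (t mod m) (t div m)) = (\<Sum>i<m. g i k)"
    using sum.shift_bounds_nat_ivl[of "\<lambda>t. g (t mod m) (t div m)" 0 "m*k" m]
    by (simp add: add.commute lessThan_atLeast0)
  finally show ?case using Suc by (simp add: sum.distrib)
qed

lemma mod_div_less_of_less_mult:
  fixes t :: nat
  assumes "t < m * k"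
  shows "t mod m < m" and "t div m < k"
  using assms by (metis less_mult_imp_div_less mod_less_divisor mult.commute mult_is_0 neq0_conv not_less0)+

lemma add_mult_less_mult:
  fixes i j :: nat
  assumes "i < m" and "j < k"
  shows "i + j * m < m * k"
proof -
  have "i + j * m < Suc j * m" using assms(1) by simp
  also have "\<dots> \<le> k * m" using assms(2) by (intro mult_le_mono1) simp
  finally show ?thesis by (simp add: mult.commute)
qed

lemma vecm_mat: "vecm (mat m k f) = vec (m * k) (\<lambda>t. f (t mod m, t div m))"
  unfolding vecm_def by (intro eq_vecI) (auto simp: mod_div_less_of_less_mult[of _ m k])

lemma dim_vecm [simp]: "dim_vec (vecm A) = dim_row A * dim_col A"
  unfolding vecm_def by simp

lemma vecm_carrier [simp]: "A \<in> carrier_mat m k \<Longrightarrow> vecm A \<in> carrier_vec (m * k)"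
  unfolding vecm_def carrier_mat_def by auto

lemma matv_carrier [simp]: "matv m k v \<in> carrier_mat m k"
  unfolding matv_def by simp

lemma matv_vecm: "A \<in> carrier_mat m k \<Longrightarrow> matv m k (vecm A) = A"
  unfolding matv_def vecm_def by (intro eq_matI) (auto simp: add_mult_less_mult)

lemma vecm_matv: "v \<in> carrier_vec (m * k) \<Longrightarrow> vecm (matv m k v) = v"
  unfolding vecm_def matv_def
  by (intro eq_vecI) (auto simp: mod_div_less_of_less_mult[of _ m k] mult.commute)

lemma vecm_add:
  "A \<in> carrier_mat m k \<Longrightarrow> B \<in> carrier_mat m k \<Longrightarrow> vecm (A + B) = vecm A + vecm B"
  unfolding vecm_def by (intro eq_vecI) (auto simp: mod_div_less_of_less_mult[of _ m k])

lemma vecm_smult: "vecm (c \<cdot>\<^sub>m A) = c \<cdot>\<^sub>v vecm A"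
  unfolding vecm_def
  by (intro eq_vecI) (auto simp: mod_div_less_of_less_mult[of _ "dim_row A" "dim_col A"])

lemma scalar_prod_vecm:
  assumes "A \<in> carrier_mat m k" and "B \<in> carrier_mat m k"
  shows "vecm A \<bullet> vecm B = (\<Sum>i<m. \<Sum>j<k. A $$ (i,j) * B $$ (i,j))"
proof -
  have "vecm A \<bullet> vecm B = (\<Sum>t<m*k. A $$ (t mod m, t div m) * B $$ (t mod m, t div m))"
    using assms unfolding scalar_prod_def vecm_def
    by (auto simp: lessThan_atLeast0 intro!: sum.cong)
  also have "\<dots> = (\<Sum>i<m. \<Sum>j<k. A $$ (i,j) * B $$ (i,j))"
    by (rule sum_lessThan_mult_mod_div)
  finally show ?thesis .
qed

definition outer_prod :: "real vec \<Rightarrow> real vec \<Rightarrow> real mat" where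
  "outer_prod a b = mat (dim_vec a) (dim_vec b) (\<lambda>(i,j). a $ i * b $ j)"

lemma dim_outer_prod [simp]:
  "dim_row (outer_prod a b) = dim_vec a" "dim_col (outer_prod a b) = dim_vec b"
  unfolding outer_prod_def by simp_all

lemma outer_prod_carrier [simp]:
  "a \<in> carrier_vec m \<Longrightarrow> b \<in> carrier_vec k \<Longrightarrow> outer_prod a b \<in> carrier_mat m k"
  unfolding outer_prod_def by simp

lemma outer_prod_mult_vec:
  assumes "b \<in> carrier_vec k" and "c \<in> carrier_vec k"
  shows "outer_prod a b *\<^sub>v c = (b \<bullet> c) \<cdot>\<^sub>v a"
  using assms unfolding outer_prod_def
  by (intro eq_vecI) (auto simp: scalar_prod_def sum_distrib_left ac_simps)

lemma outer_prod_mult_mat: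
  assumes "b \<in> carrier_vec m" and "Y \<in> carrier_mat m k"
  shows "outer_prod a b * Y = outer_prod a (transpose_mat Y *\<^sub>v b)"
  using assms unfolding outer_prod_def
  by (intro eq_matI) (auto simp: scalar_prod_def sum_distrib_left ac_simps)

lemma scalar_prod_vecm_outer_prod:
  assumes a: "a \<in> carrier_vec m" and b: "b \<in> carrier_vec k" and S: "S \<in> carrier_mat m k"
  shows "vecm (outer_prod a b) \<bullet> vecm S = a \<bullet> (S *\<^sub>v b)"
proof -
  have "vecm (outer_prod a b) \<bullet> vecm S = (\<Sum>i<m. \<Sum>j<k. a $ i * b $ j * S $$ (i,j))"
    using a b S by (subst scalar_prod_vecm[of _ m k]) (auto simp: outer_prod_def)
  also have "\<dots> = a \<bullet> (S *\<^sub>v b)"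
    using a b S by (auto simp: scalar_prod_def lessThan_atLeast0 sum_distrib_left ac_simps
        intro!: sum.cong)
  finally show ?thesis .
qed

lemma scalar_prod_vecm_outer_prods:
  assumes "a \<in> carrier_vec m" "b \<in> carrier_vec k" "c \<in> carrier_vec m" "d \<in> carrier_vec k"
  shows "vecm (outer_prod a b) \<bullet> vecm (outer_prod c d) = (a \<bullet> c) * (b \<bullet> d)"
  using assms by (simp add: scalar_prod_vecm_outer_prod outer_prod_mult_vec comm_scalar_prod[of d k b])

lemma scalar_prod_vecm_sym_outer_prod_self:
  assumes a: "a \<in> carrier_vec n" and b: "b \<in> carrier_vec n"
  shows "vecm (outer_prod a b + outer_prod b a) \<bullet> vecm (outer_prod a b + outer_prod b a)
    = 2 * (a \<bullet> a) * (b \<bullet> b) + 2 * (a \<bullet> b)\<^sup>2"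
  using a b
  by (simp add: vecm_add[of _ n n] add_scalar_prod_distrib[of _ "n*n"] scalar_prod_add_distrib[of _ "n*n"]
      scalar_prod_vecm_outer_prods comm_scalar_prod[of b n a] power2_eq_square algebra_simps)

lemma kron_smult_one_mult_vecm:
  assumes M: "M \<in> carrier_mat n n" and Y: "Y \<in> carrier_mat n r"
  shows "kron (c \<cdot>\<^sub>m 1\<^sub>m r) M *\<^sub>v vecm Y = vecm (c \<cdot>\<^sub>m (M * Y))"
proof (rule eq_vecI)
  fix t assume "t < dim_vec (vecm (c \<cdot>\<^sub>m (M * Y)))"
  then have t: "t < n * r" using M Y by simp
  note lt = mod_div_less_of_less_mult[OF t]
  have "(kron (c \<cdot>\<^sub>m 1\<^sub>m r) M *\<^sub>v vecm Y) $ t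
      = (\<Sum>s<n*r. (\<lambda>i j. (if t div n = j then c else 0) * M $$ (t mod n, i) * Y $$ (i, j))
                    (s mod n) (s div n))"
    using t M Y lt unfolding kron_def vecm_def
    by (auto simp: scalar_prod_def lessThan_atLeast0 mult.commute[of n]
        mod_div_less_of_less_mult[of _ n r] intro!: sum.cong)
  also have "\<dots> = (\<Sum>i<n. \<Sum>j<r. (if t div n = j then c else 0) * M $$ (t mod n, i) * Y $$ (i, j))"
    by (rule sum_lessThan_mult_mod_div)
  also have "\<dots> = (\<Sum>i<n. c * M $$ (t mod n, i) * Y $$ (i, t div n))"
    using lt
    by (simp add: if_distrib if_distribR sum.If_cases)
  also have "\<dots> = vecm (c \<cdot>\<^sub>m (M * Y)) $ t"
    using t M Y lt unfolding vecm_def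
    by (auto simp: scalar_prod_def lessThan_atLeast0 sum_distrib_left mult.assoc)
  finally show "(kron (c \<cdot>\<^sub>m 1\<^sub>m r) M *\<^sub>v vecm Y) $ t = vecm (c \<cdot>\<^sub>m (M * Y)) $ t" .
qed (use M Y in \<open>simp add: kron_def\<close>)

lemma quadratic_form_kron_outer_prod:
  assumes a: "a \<in> carrier_vec n" and Y: "Y \<in> carrier_mat n r"
  shows "vecm Y \<bullet> (kron (c \<cdot>\<^sub>m 1\<^sub>m r) (\<gamma> \<cdot>\<^sub>m outer_prod a a) *\<^sub>v vecm Y)
    = c * \<gamma> * ((transpose_mat Y *\<^sub>v a) \<bullet> (transpose_mat Y *\<^sub>v a))"
proof -
  define w where "w = transpose_mat Y *\<^sub>v a"
  have w: "w \<in> carrier_vec r" using Y a unfolding w_def by simp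
  have "kron (c \<cdot>\<^sub>m 1\<^sub>m r) (\<gamma> \<cdot>\<^sub>m outer_prod a a) *\<^sub>v vecm Y
      = vecm (c \<cdot>\<^sub>m ((\<gamma> \<cdot>\<^sub>m outer_prod a a) * Y))"
    using a Y by (intro kron_smult_one_mult_vecm) auto
  also have "(\<gamma> \<cdot>\<^sub>m outer_prod a a) * Y = \<gamma> \<cdot>\<^sub>m outer_prod a w"
    using a Y unfolding w_def by (simp add: mult_smult_assoc_mat[of _ n n] outer_prod_mult_mat)
  finally have "vecm Y \<bullet> (kron (c \<cdot>\<^sub>m 1\<^sub>m r) (\<gamma> \<cdot>\<^sub>m outer_prod a a) *\<^sub>v vecm Y)
      = c * \<gamma> * (vecm (outer_prod a w) \<bullet> vecm Y)"
    using a w Y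
    by (simp add: vecm_smult comm_scalar_prod[of "vecm Y" "n * r"] carrier_vecD[OF a] carrier_vecD[OF w])
  also have "vecm (outer_prod a w) \<bullet> vecm Y = w \<bullet> w"
    using scalar_prod_vecm_outer_prod[OF a w Y] transpose_vec_mult_scalar[OF Y w a]
    unfolding w_def by simp
  finally show ?thesis unfolding w_def .
qed

lemma scalar_prod_self_nonneg: "0 \<le> (v :: real vec) \<bullet> v"
  using conjugate_square_ge_0_vec[of v] by (simp add: conjugate_vec_def scalar_prod_def)

lemma scalar_prod_self_eq_0_iff:
  "(v :: real vec) \<in> carrier_vec n \<Longrightarrow> v \<bullet> v = 0 \<longleftrightarrow> v = 0\<^sub>v n"
  using conjugate_square_eq_0_vec[of v n] by (simp add: conjugate_vec_def scalar_prod_def)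

lemma mult_mat_vec_zero: "A \<in> carrier_mat m k \<Longrightarrow> A *\<^sub>v 0\<^sub>v k = (0\<^sub>v m :: real vec)"
  by (intro eq_vecI) auto

lemma smult_mat_mult_vec:
  "A \<in> carrier_mat m k \<Longrightarrow> v \<in> carrier_vec k \<Longrightarrow> ((c :: real) \<cdot>\<^sub>m A) *\<^sub>v v = c \<cdot>\<^sub>v (A *\<^sub>v v)"
  by (intro eq_vecI) (auto simp: scalar_prod_def sum_distrib_left mult.assoc)

lemma psd_smult:
  assumes A: "psd A" and c: "0 \<le> (c::real)"
  shows "psd (c \<cdot>\<^sub>m A)"
proof -
  have A_carrier: "A \<in> carrier_mat (dim_row A) (dim_row A)" using A unfolding psd_def by blast
  have dim_row_smult: "dim_row (c \<cdot>\<^sub>m A) = dim_row A" by (rule index_smult_mat(2))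
  have smult_carrier: "c \<cdot>\<^sub>m A \<in> carrier_mat (dim_row (c \<cdot>\<^sub>m A)) (dim_row (c \<cdot>\<^sub>m A))"
    unfolding dim_row_smult by (rule smult_carrier_mat[OF A_carrier])
  have smult_nonneg: "0 \<le> x \<bullet> ((c \<cdot>\<^sub>m A) *\<^sub>v x)" if x: "x \<in> carrier_vec (dim_row (c \<cdot>\<^sub>m A))" for x
  proof -
    have x': "x \<in> carrier_vec (dim_row A)" using x unfolding dim_row_smult .
    have "(c \<cdot>\<^sub>m A) *\<^sub>v x = c \<cdot>\<^sub>v (A *\<^sub>v x)" by (rule smult_mat_mult_vec[OF A_carrier x'])
    then have "x \<bullet> ((c \<cdot>\<^sub>m A) *\<^sub>v x) = c * (x \<bullet> (A *\<^sub>v x))"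
      using scalar_prod_smult_distrib[OF x' mult_mat_vec_carrier[OF A_carrier x']] by simp
    moreover have "0 \<le> x \<bullet> (A *\<^sub>v x)" using A x' unfolding psd_def by blast
    ultimately show ?thesis using c by simp
  qed
  show ?thesis unfolding psd_def using smult_carrier smult_nonneg by blast
qed

lemma loewner_le_smult:
  assumes "A \<in> carrier_mat N N" and "B \<in> carrier_mat N N" and "loewner_le A B" and "0 \<le> c"
  shows "loewner_le (c \<cdot>\<^sub>m A) (c \<cdot>\<^sub>m B)"
proof -
  have "c \<cdot>\<^sub>m B - c \<cdot>\<^sub>m A = c \<cdot>\<^sub>m (B - A)"
    using assms(1,2) by (intro eq_matI) (auto simp: algebra_simps)
  then show ?thesis using assms(3,4) psd_smult unfolding loewner_le_def by simp
qed

lemma psd_if_loewner_le_one: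
  assumes H: "H \<in> carrier_mat N N" and "loewner_le (1\<^sub>m N) H"
  shows "psd H"
proof -
  have "0 \<le> x \<bullet> (H *\<^sub>v x)" if x: "x \<in> carrier_vec N" for x
  proof -
    have "0 \<le> x \<bullet> ((H - 1\<^sub>m N) *\<^sub>v x)"
      using assms x unfolding loewner_le_def psd_def by simp
    also have "\<dots> = x \<bullet> (H *\<^sub>v x) - x \<bullet> x"
      using H x by (simp add: minus_mult_distrib_mat_vec scalar_prod_minus_distrib[of _ N])
    finally show ?thesis using scalar_prod_self_nonneg[of x] by linarith
  qed
  then show ?thesis using H unfolding psd_def by simp
qed

lemma quadratic_form_congruence:
  fixes J H :: "real mat"
  assumes J: "J \<in> carrier_mat m n" and H: "H \<in> carrier_mat m m" and x: "x \<in> carrier_vec n"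
  shows "x \<bullet> ((transpose_mat J * H * J) *\<^sub>v x) = (J *\<^sub>v x) \<bullet> (H *\<^sub>v (J *\<^sub>v x))"
proof -
  define y where "y = H *\<^sub>v (J *\<^sub>v x)"
  have y: "y \<in> carrier_vec m" using H J x unfolding y_def by simp
  have "(transpose_mat J * H * J) *\<^sub>v x = (transpose_mat J * H) *\<^sub>v (J *\<^sub>v x)"
    using J H x by (intro assoc_mult_mat_vec) auto
  also have "\<dots> = transpose_mat J *\<^sub>v y"
    using J H x unfolding y_def by (intro assoc_mult_mat_vec) auto
  finally have "x \<bullet> ((transpose_mat J * H * J) *\<^sub>v x) = x \<bullet> (transpose_mat J *\<^sub>v y)"
    by simp
  also have "\<dots> = (transpose_mat J *\<^sub>v y) \<bullet> x"
    using J y by (intro comm_scalar_prod[OF x]) simp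
  also have "\<dots> = y \<bullet> (J *\<^sub>v x)"
    by (rule transpose_vec_mult_scalar[OF J x y])
  also have "\<dots> = (J *\<^sub>v x) \<bullet> y"
    using J x by (intro comm_scalar_prod[OF y]) simp
  finally show ?thesis unfolding y_def .
qed

lemma quadratic_form_ge_eigenvector:
  fixes H :: "real mat"
  assumes H: "H \<in> carrier_mat N N" and H_sym: "transpose_mat H = H" and "psd H"
    and s: "s \<in> carrier_vec N" and p: "p \<in> carrier_vec N" and eig: "H *\<^sub>v p = \<kappa> \<cdot>\<^sub>v p"
  shows "2 * \<kappa> * (s \<bullet> p) - \<kappa> * (p \<bullet> p) \<le> s \<bullet> (H *\<^sub>v s)"
proof -
  have "p \<bullet> (H *\<^sub>v s) = \<kappa> * (s \<bullet> p)"
    using transpose_vec_mult_scalar[OF H s p] H_sym eig s p by (simp add: comm_scalar_prod[of p N])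
  moreover have "0 \<le> (s - p) \<bullet> (H *\<^sub>v (s - p))"
    using \<open>psd H\<close> H s p unfolding psd_def by simp
  moreover have "(s - p) \<bullet> (H *\<^sub>v (s - p))
      = s \<bullet> (H *\<^sub>v s) - s \<bullet> (H *\<^sub>v p) - (p \<bullet> (H *\<^sub>v s) - p \<bullet> (H *\<^sub>v p))"
    using H s p by (simp add: mult_minus_distrib_mat_vec minus_scalar_prod_distrib[of _ N]
        scalar_prod_minus_distrib[of _ N])
  ultimately show ?thesis using s p eig by simp
qed

lemma eigenvector_lincomb:
  fixes H :: "real mat" and f :: "'i \<Rightarrow> real vec"
  assumes H: "H \<in> carrier_mat N N" and "finite A"
    and f: "\<And>k. k \<in> A \<Longrightarrow> f k \<in> carrier_vec N"
    and eig: "\<And>k. k \<in> A \<Longrightarrow> H *\<^sub>v f k = \<kappa> \<cdot>\<^sub>v f k"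
  shows "H *\<^sub>v vec N (\<lambda>t. \<Sum>k\<in>A. \<beta> k * f k $ t) = \<kappa> \<cdot>\<^sub>v vec N (\<lambda>t. \<Sum>k\<in>A. \<beta> k * f k $ t)"
  using \<open>finite A\<close> f eig
proof (induction A rule: finite_induct)
  case empty
  show ?case using H by (intro eq_vecI) (auto simp: scalar_prod_def)
next
  case (insert k A)
  define v where "v = vec N (\<lambda>t. \<Sum>k\<in>A. \<beta> k * f k $ t)"
  have v: "v \<in> carrier_vec N" unfolding v_def by simp
  have fk: "f k \<in> carrier_vec N" and eig_k: "H *\<^sub>v f k = \<kappa> \<cdot>\<^sub>v f k"
    using insert.prems by simp_all
  have "vec N (\<lambda>t. \<Sum>k\<in>insert k A. \<beta> k * f k $ t) = \<beta> k \<cdot>\<^sub>v f k + v"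
    using insert.hyps fk unfolding v_def by (intro eq_vecI) auto
  moreover have "H *\<^sub>v (\<beta> k \<cdot>\<^sub>v f k + v) = \<beta> k \<cdot>\<^sub>v (H *\<^sub>v f k) + H *\<^sub>v v"
    using H fk v by (simp add: mult_add_distrib_mat_vec[of _ N N] mult_mat_vec[of _ N N])
  moreover have "H *\<^sub>v v = \<kappa> \<cdot>\<^sub>v v" using insert unfolding v_def by simp
  ultimately show ?case
    using fk v H eig_k by (intro eq_vecI) (auto simp: algebra_simps carrier_vecD[OF fk])
qed

lemma scalar_prod_lincomb:
  fixes f :: "'i \<Rightarrow> real vec"
  assumes a: "a \<in> carrier_vec n" and f: "\<And>k. k \<in> A \<Longrightarrow> f k \<in> carrier_vec n"
  shows "a \<bullet> vec n (\<lambda>i. \<Sum>k\<in>A. \<beta> k * f k $ i) = (\<Sum>k\<in>A. \<beta> k * (a \<bullet> f k))"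
proof -
  have "a \<bullet> vec n (\<lambda>i. \<Sum>k\<in>A. \<beta> k * f k $ i) = (\<Sum>i<n. \<Sum>k\<in>A. \<beta> k * (a $ i * f k $ i))"
    using a by (simp add: scalar_prod_def lessThan_atLeast0 sum_distrib_left ac_simps)
  also have "\<dots> = (\<Sum>k\<in>A. \<beta> k * (\<Sum>i<n. a $ i * f k $ i))"
    by (simp add: sum.swap[of _ A] sum_distrib_left)
  also have "\<dots> = (\<Sum>k\<in>A. \<beta> k * (a \<bullet> f k))"
  proof (rule sum.cong[OF refl])
    fix k assume "k \<in> A"
    then have "dim_vec (f k) = n" using f carrier_vecD by blast
    then show "\<beta> k * (\<Sum>i<n. a $ i * f k $ i) = \<beta> k * (a \<bullet> f k)"
      by (simp add: scalar_prod_def lessThan_atLeast0)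
  qed
  finally show ?thesis .
qed

lemma add_mult_transpose_mult_vec:
  fixes X Y :: "real mat"
  assumes X: "X \<in> carrier_mat m k" and Y: "Y \<in> carrier_mat m k" and y: "y \<in> carrier_vec m"
  shows "(X * transpose_mat Y + Y * transpose_mat X) *\<^sub>v y
    = X *\<^sub>v (transpose_mat Y *\<^sub>v y) + Y *\<^sub>v (transpose_mat X *\<^sub>v y)"
  using assms by (simp add: add_mult_distrib_mat_vec[of _ m m] assoc_mult_mat_vec[of _ m k _ m])

lemma sum_lessThan_if_less_split:
  fixes F :: "nat \<Rightarrow> real"
  assumes "q \<le> r"
  shows "(\<Sum>c<r. (if c < q then a else b) * F (Suc c)) = a * (\<Sum>k=1..q. F k) + b * (\<Sum>k=Suc q..r. F k)"
proof -
  have "(\<Sum>c<r. (if c < q then a else b) * F (Suc c))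
      = (\<Sum>c=0..<q. (if c < q then a else b) * F (Suc c)) + (\<Sum>c=q..<r. (if c < q then a else b) * F (Suc c))"
    using assms by (simp only: lessThan_atLeast0 sum.atLeastLessThan_concat le0)
  also have "\<dots> = a * (\<Sum>c=0..<q. F (Suc c)) + b * (\<Sum>c=q..<r. F (Suc c))"
    by (simp add: sum_distrib_left)
  also have "\<dots> = a * (\<Sum>k=1..q. F k) + b * (\<Sum>k=Suc q..r. F k)"
    by (simp add: sum.shift_bounds_Suc_ivl[symmetric] atLeastLessThanSuc_atLeastAtMost)
  finally show ?thesis .
qed

lemma sum_lessThan_Suc_if_zero:
  fixes F :: "nat \<Rightarrow> real"
  shows "(\<Sum>c<Suc m. if c = 0 then F 0 else F (q + c)) = F 0 + (\<Sum>k=Suc q..q + m. F k)"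
  by (induction m) auto

locale delta_ub_example =
  fixes n r rs :: nat
    and u :: "nat \<Rightarrow> real vec"
    and H J X Z :: "real mat"
    and q :: nat and \<kappa> \<xi> \<delta> :: real
  assumes rs_ge: "1 \<le> rs" and rs_le: "rs \<le> r" and r_lt: "r < n"
    and u_carrier: "\<And>i. i < n \<Longrightarrow> u i \<in> carrier_vec n"
    and u_orthonormal: "\<And>i j. i < n \<Longrightarrow> j < n \<Longrightarrow> u i \<bullet> u j = (if i = j then 1 else 0)"
    and q_def: "q = r - rs + 1"
    and kappa_def: "\<kappa> = 1 + 2 * sqrt (real q)"
    and H_carrier: "H \<in> carrier_mat (n*n) (n*n)"
    and H_sym: "transpose_mat H = H"
    and H_lower: "loewner_le (1\<^sub>m (n*n)) H"
    and H_upper: "loewner_le H (\<kappa> \<cdot>\<^sub>m 1\<^sub>m (n*n))"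
    and H_eig1: "H *\<^sub>v vecm (mat n n (\<lambda>(i,j). sqrt (real q) * (u 0 $ i * u 0 $ j)
                   + (\<Sum>k=1..q. u k $ i * u k $ j)))
               = \<kappa> \<cdot>\<^sub>v vecm (mat n n (\<lambda>(i,j). sqrt (real q) * (u 0 $ i * u 0 $ j)
                   + (\<Sum>k=1..q. u k $ i * u k $ j)))"
    and H_eig2: "H *\<^sub>v vecm (mat n n (\<lambda>(i,j). sqrt (real q) * (u 0 $ i * u 0 $ j)
                   - (\<Sum>k=1..q. u k $ i * u k $ j)))
               = vecm (mat n n (\<lambda>(i,j). sqrt (real q) * (u 0 $ i * u 0 $ j)
                   - (\<Sum>k=1..q. u k $ i * u k $ j)))"
    and H_eig3: "\<And>k. 1 \<le> k \<Longrightarrow> k \<le> r \<Longrightarrow>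
               H *\<^sub>v vecm (mat n n (\<lambda>(i,j). u 0 $ i * u k $ j + u k $ i * u 0 $ j))
               = \<kappa> \<cdot>\<^sub>v vecm (mat n n (\<lambda>(i,j). u 0 $ i * u k $ j + u k $ i * u 0 $ j))"
    and xi_def: "\<xi> = sqrt (1 + sqrt (real q))"
    and delta_def: "\<delta> = 1 / (1 + 1 / sqrt (real q))"
    and Z_def: "Z = mat n rs (\<lambda>(i,j). \<xi> * (if j = 0 then u 0 $ i else u (q + j) $ i))"
    and X_def: "X = mat n r (\<lambda>(i,j). (if j < q then 1 else \<xi>) * u (j + 1) $ i)"
    and J_carrier: "J \<in> carrier_mat (n*n) (n*r)"
    and J_prop: "\<And>Y. Y \<in> carrier_mat n r \<Longrightarrow>
               J *\<^sub>v vecm Y = vecm (X * transpose_mat Y + Y * transpose_mat X)"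
begin

lemma q_ge_1: "1 \<le> q" and q_le_r: "q \<le> r" and rs_eq: "rs = Suc (r - q)"
  using q_def rs_ge rs_le by auto

lemma sqrt_q_ge_1: "1 \<le> sqrt (real q)"
  using q_ge_1 by simp

lemma xi_sq: "\<xi>\<^sup>2 = 1 + sqrt (real q)"
  unfolding xi_def by simp

lemma xi_ge_1: "1 \<le> \<xi>"
  unfolding xi_def using sqrt_q_ge_1 by simp

lemma kappa_nonneg: "0 \<le> \<kappa>"
  unfolding kappa_def by simp

lemma one_plus_sqrt_q_pos: "0 < 1 + sqrt (real q)"
  using real_sqrt_ge_zero[of q] by linarith

lemma delta_eq: "\<delta> = sqrt (real q) / (1 + sqrt (real q))"
  unfolding delta_def using sqrt_q_ge_1 by (simp add: field_simps)

lemma one_minus_delta_pos: "0 < 1 - \<delta>"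
  using one_plus_sqrt_q_pos unfolding delta_eq by (simp add: field_simps)

lemma one_plus_delta: "1 + \<delta> = (1 - \<delta>) * \<kappa>"
  using one_plus_sqrt_q_pos unfolding delta_eq kappa_def by (simp add: field_simps)

lemma u_carrier_le_r: "k \<le> r \<Longrightarrow> u k \<in> carrier_vec n"
  using u_carrier r_lt by simp

lemma dim_u: "k \<le> r \<Longrightarrow> dim_vec (u k) = n"
  using carrier_vecD[OF u_carrier_le_r] .

lemma u_orthonormal_le_r: "j \<le> r \<Longrightarrow> k \<le> r \<Longrightarrow> u j \<bullet> u k = (if j = k then 1 else 0)"
  using u_orthonormal r_lt by simp

lemma X_carrier: "X \<in> carrier_mat n r"
  unfolding X_def by simp

lemma Z_carrier: "Z \<in> carrier_mat n rs"
  unfolding Z_def by simp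

definition xscale :: "nat \<Rightarrow> real" where
  "xscale j = (if j < q then 1 else \<xi>)"

lemma X_mult_vec:
  assumes "w \<in> carrier_vec r"
  shows "X *\<^sub>v w = vec n (\<lambda>i. \<Sum>j<r. (xscale j * w $ j) * u (Suc j) $ i)"
  using assms unfolding X_def xscale_def
  by (intro eq_vecI) (auto simp: scalar_prod_def lessThan_atLeast0 ac_simps)

lemma u_scalar_prod_X_mult_vec:
  assumes w: "w \<in> carrier_vec r" and k: "k \<le> r"
  shows "u k \<bullet> (X *\<^sub>v w) = (if k = 0 then 0 else xscale (k - 1) * w $ (k - 1))"
proof -
  have "u k \<bullet> (X *\<^sub>v w) = (\<Sum>j<r. (xscale j * w $ j) * (u k \<bullet> u (Suc j)))"
    unfolding X_mult_vec[OF w] using k by (intro scalar_prod_lincomb u_carrier_le_r) auto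
  also have "\<dots> = (\<Sum>j<r. if k = Suc j then xscale j * w $ j else 0)"
    using k by (intro sum.cong refl) (simp add: u_orthonormal_le_r)
  also have "\<dots> = (if k = 0 then 0 else xscale (k - 1) * w $ (k - 1))"
    using k by (cases k) auto
  finally show ?thesis .
qed

lemma u0_scalar_prod_X_mult_vec: "w \<in> carrier_vec r \<Longrightarrow> u 0 \<bullet> (X *\<^sub>v w) = 0"
  by (simp add: u_scalar_prod_X_mult_vec)

lemma transpose_X_mult_u0: "transpose_mat X *\<^sub>v u 0 = 0\<^sub>v r"
proof -
  define z where "z = transpose_mat X *\<^sub>v u 0"
  have z: "z \<in> carrier_vec r" using X_carrier u_carrier_le_r[of 0] unfolding z_def by simp
  have "z \<bullet> z = u 0 \<bullet> (X *\<^sub>v z)"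
    using transpose_vec_mult_scalar[OF X_carrier z u_carrier_le_r] unfolding z_def by simp
  then have "z \<bullet> z = 0" using u0_scalar_prod_X_mult_vec[OF z] by simp
  then show ?thesis using scalar_prod_self_eq_0_iff[OF z] unfolding z_def by simp
qed

lemma norm_le_X_mult_vec:
  assumes w: "w \<in> carrier_vec r"
  shows "w \<bullet> w \<le> (X *\<^sub>v w) \<bullet> (X *\<^sub>v w)"
proof -
  have Xw: "X *\<^sub>v w \<in> carrier_vec n" using X_carrier w by simp
  have "(X *\<^sub>v w) \<bullet> (X *\<^sub>v w) = (\<Sum>j<r. (xscale j * w $ j) * ((X *\<^sub>v w) \<bullet> u (Suc j)))"
    by (subst (2) X_mult_vec[OF w]) (intro scalar_prod_lincomb[OF Xw] u_carrier_le_r, simp)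
  also have "\<dots> = (\<Sum>j<r. (xscale j * w $ j)\<^sup>2)"
    using Xw u_carrier_le_r w
    by (intro sum.cong refl) (simp add: comm_scalar_prod[OF Xw] u_scalar_prod_X_mult_vec power2_eq_square)
  also have "\<dots> \<ge> (\<Sum>j<r. (w $ j)\<^sup>2)"
  proof (intro sum_mono)
    fix j
    have "1 \<le> (xscale j)\<^sup>2" unfolding xscale_def using xi_ge_1 by simp
    then show "(w $ j)\<^sup>2 \<le> (xscale j * w $ j)\<^sup>2"
      using mult_right_mono[of 1 "(xscale j)\<^sup>2" "(w $ j)\<^sup>2"] by (simp add: power_mult_distrib)
  qed
  finally show ?thesis
    using w by (simp add: scalar_prod_def lessThan_atLeast0 power2_eq_square)
qed

lemma residual_eq:
  "X * transpose_mat X - Z * transpose_mat Z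
     = mat n n (\<lambda>(i,j). (\<Sum>k=1..q. u k $ i * u k $ j) - \<xi>\<^sup>2 * (u 0 $ i * u 0 $ j))"
  (is "_ = ?R")
proof (rule eq_matI)
  fix i j assume "i < dim_row ?R" and "j < dim_col ?R"
  then have i: "i < n" and j: "j < n" by simp_all
  define F where "F k = u k $ i * u k $ j" for k
  have "(X * transpose_mat X) $$ (i,j) = (\<Sum>c<r. (if c < q then 1 else \<xi>\<^sup>2) * F (Suc c))"
    using i j unfolding X_def F_def
    by (auto simp: scalar_prod_def lessThan_atLeast0 power2_eq_square intro!: sum.cong)
  also have "\<dots> = (\<Sum>k=1..q. F k) + \<xi>\<^sup>2 * (\<Sum>k=Suc q..r. F k)"
    using sum_lessThan_if_less_split[OF q_le_r, of 1 "\<xi>\<^sup>2" F] by simp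
  finally have XX: "(X * transpose_mat X) $$ (i,j) = (\<Sum>k=1..q. F k) + \<xi>\<^sup>2 * (\<Sum>k=Suc q..r. F k)" .
  have "(Z * transpose_mat Z) $$ (i,j) = \<xi>\<^sup>2 * (\<Sum>c<rs. if c = 0 then F 0 else F (q + c))"
    using i j unfolding Z_def F_def
    by (auto simp: scalar_prod_def lessThan_atLeast0 sum_distrib_left power2_eq_square intro!: sum.cong)
  also have "\<dots> = \<xi>\<^sup>2 * (F 0 + (\<Sum>k=Suc q..r. F k))"
    using sum_lessThan_Suc_if_zero[where m = "r - q" and F = F and q = q] q_le_r rs_eq by simp
  finally have ZZ: "(Z * transpose_mat Z) $$ (i,j) = \<xi>\<^sup>2 * (F 0 + (\<Sum>k=Suc q..r. F k))" .
  show "(X * transpose_mat X - Z * transpose_mat Z) $$ (i,j) = ?R $$ (i,j)"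
    using i j XX ZZ X_carrier Z_carrier by (simp add: F_def algebra_simps)
qed (use X_carrier Z_carrier in auto)

lemma H_mult_residual:
  "H *\<^sub>v vecm (X * transpose_mat X - Z * transpose_mat Z) = (- \<kappa>) \<cdot>\<^sub>v vecm (outer_prod (u 0) (u 0))"
proof -
  define A where "A = vecm (mat n n (\<lambda>(i,j). sqrt (real q) * (u 0 $ i * u 0 $ j)
                   + (\<Sum>k=1..q. u k $ i * u k $ j)))"
  define B where "B = vecm (mat n n (\<lambda>(i,j). sqrt (real q) * (u 0 $ i * u 0 $ j)
                   - (\<Sum>k=1..q. u k $ i * u k $ j)))"
  define a where "a = - 1 / (2 * sqrt (real q))"
  define b where "b = - 1 - 1 / (2 * sqrt (real q))"
  have A: "A \<in> carrier_vec (n*n)" and B: "B \<in> carrier_vec (n*n)"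
    unfolding A_def B_def by (simp_all add: vecm_mat)
  have "vecm (X * transpose_mat X - Z * transpose_mat Z) = a \<cdot>\<^sub>v A + b \<cdot>\<^sub>v B"
    unfolding residual_eq A_def B_def vecm_mat a_def b_def xi_sq using sqrt_q_ge_1
    by (intro eq_vecI) (auto simp: field_simps)
  then have "H *\<^sub>v vecm (X * transpose_mat X - Z * transpose_mat Z) = a \<cdot>\<^sub>v (\<kappa> \<cdot>\<^sub>v A) + b \<cdot>\<^sub>v B"
    using H_eig1 H_eig2 H_carrier A B unfolding A_def[symmetric] B_def[symmetric]
    by (simp add: mult_add_distrib_mat_vec[of _ "n*n" "n*n"] mult_mat_vec[of _ "n*n" "n*n"])
  also have "\<dots> = (- \<kappa>) \<cdot>\<^sub>v vecm (outer_prod (u 0) (u 0))"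
    unfolding A_def B_def vecm_mat a_def b_def kappa_def outer_prod_def dim_u[OF le0]
    using sqrt_q_ge_1 by (intro eq_vecI) (auto simp: field_simps)
  finally show ?thesis .
qed

lemma scaled_H_mult_residual:
  "((1 - \<delta>) \<cdot>\<^sub>m H) *\<^sub>v vecm (X * transpose_mat X - Z * transpose_mat Z)
     = vecm ((- (1 - \<delta>) * \<kappa>) \<cdot>\<^sub>m outer_prod (u 0) (u 0))"
proof -
  have "X * transpose_mat X - Z * transpose_mat Z \<in> carrier_mat n n"
    using X_carrier Z_carrier by auto
  then show ?thesis
    by (simp add: smult_mat_mult_vec[OF H_carrier] H_mult_residual vecm_smult smult_smult_assoc
        algebra_simps)
qed

lemma J_mult_vec:
  "x \<in> carrier_vec (n*r) \<Longrightarrow>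
     J *\<^sub>v x = vecm (X * transpose_mat (matv n r x) + matv n r x * transpose_mat X)"
  using J_prop[OF matv_carrier] vecm_matv by metis

lemma transpose_J_mult_vecm_outer_u0:
  "transpose_mat J *\<^sub>v vecm (outer_prod (u 0) (u 0)) = 0\<^sub>v (n*r)"
proof -
  define z where "z = transpose_mat J *\<^sub>v vecm (outer_prod (u 0) (u 0))"
  define Y where "Y = matv n r z"
  have u0: "u 0 \<in> carrier_vec n" by (simp add: u_carrier_le_r)
  have z: "z \<in> carrier_vec (n*r)" using J_carrier u0 unfolding z_def by simp
  have Y: "Y \<in> carrier_mat n r" unfolding Y_def by simp
  have "z \<bullet> z = vecm (outer_prod (u 0) (u 0)) \<bullet> vecm (X * transpose_mat Y + Y * transpose_mat X)"
    using transpose_vec_mult_scalar[OF J_carrier z, of "vecm (outer_prod (u 0) (u 0))"] u0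
    unfolding J_mult_vec[OF z] Y_def[symmetric] z_def[symmetric] by simp
  also have "\<dots> = u 0 \<bullet> (X *\<^sub>v (transpose_mat Y *\<^sub>v u 0)) + u 0 \<bullet> (Y *\<^sub>v (transpose_mat X *\<^sub>v u 0))"
    using u0 X_carrier Y
    by (simp add: scalar_prod_vecm_outer_prod[of _ n _ n] add_mult_transpose_mult_vec[of _ n r]
        scalar_prod_add_distrib[of _ n])
  also have "\<dots> = 0"
    using u0 X_carrier Y by (simp add: u0_scalar_prod_X_mult_vec transpose_X_mult_u0 mult_mat_vec_zero)
  finally show ?thesis using scalar_prod_self_eq_0_iff[OF z] unfolding z_def by simp
qed

lemma first_order_condition:
  "transpose_mat J *\<^sub>v (((1 - \<delta>) \<cdot>\<^sub>m H) *\<^sub>v vecm (X * transpose_mat X - Z * transpose_mat Z))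
     = 0\<^sub>v (n*r)"
proof -
  have "vecm (outer_prod (u 0) (u 0)) \<in> carrier_vec (n*n)"
    using u_carrier_le_r[of 0] by simp
  then have "transpose_mat J *\<^sub>v (((1 - \<delta>) \<cdot>\<^sub>m H) *\<^sub>v vecm (X * transpose_mat X - Z * transpose_mat Z))
      = (- (1 - \<delta>) * \<kappa>) \<cdot>\<^sub>v (transpose_mat J *\<^sub>v vecm (outer_prod (u 0) (u 0)))"
    using J_carrier by (simp add: scaled_H_mult_residual vecm_smult mult_mat_vec[of _ "n*r" "n*n"])
  then show ?thesis unfolding transpose_J_mult_vecm_outer_u0 by auto
qed

lemma H_mult_sym_outer_prod_X:
  assumes w: "w \<in> carrier_vec r"
  defines "v \<equiv> X *\<^sub>v w"
  shows "H *\<^sub>v vecm (outer_prod (u 0) v + outer_prod v (u 0))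
    = \<kappa> \<cdot>\<^sub>v vecm (outer_prod (u 0) v + outer_prod v (u 0))"
proof -
  define f where "f j = vecm (mat n n (\<lambda>(i,l). u 0 $ i * u (Suc j) $ l + u (Suc j) $ i * u 0 $ l))" for j
  have f: "f j \<in> carrier_vec (n*n)" for j
    unfolding f_def by (simp add: vecm_mat)
  have eig: "H *\<^sub>v f j = \<kappa> \<cdot>\<^sub>v f j" if "j \<in> {..<r}" for j
    using H_eig3[of "Suc j"] that unfolding f_def by simp
  have u0: "u 0 \<in> carrier_vec n" by (simp add: u_carrier_le_r)
  have v: "v \<in> carrier_vec n" using X_carrier w unfolding v_def by simp
  have "vecm (outer_prod (u 0) v + outer_prod v (u 0)) = vec (n*n) (\<lambda>t. \<Sum>j<r. (xscale j * w $ j) * f j $ t)"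
    using v u_carrier_le_r[of 0] mod_div_less_of_less_mult[of _ n n]
    unfolding vecm_add[OF outer_prod_carrier[OF u0 v] outer_prod_carrier[OF v u0]]
    unfolding v_def X_mult_vec[OF w] f_def outer_prod_def dim_u[OF le0] vecm_mat
    by (intro eq_vecI) (auto simp: sum_distrib_left sum_distrib_right sum.distrib algebra_simps)
  moreover have "H *\<^sub>v vec (n*n) (\<lambda>t. \<Sum>j<r. (xscale j * w $ j) * f j $ t)
      = \<kappa> \<cdot>\<^sub>v vec (n*n) (\<lambda>t. \<Sum>j<r. (xscale j * w $ j) * f j $ t)"
    using f eig by (intro eigenvector_lincomb[OF H_carrier]) auto
  ultimately show ?thesis by simp
qed

lemma sym_prod_scalar_prod_sym_outer_prod:
  assumes Y: "Y \<in> carrier_mat n r"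
  defines "v \<equiv> X *\<^sub>v (transpose_mat Y *\<^sub>v u 0)"
  shows "vecm (X * transpose_mat Y + Y * transpose_mat X) \<bullet> vecm (outer_prod (u 0) v + outer_prod v (u 0))
    = 2 * (v \<bullet> v)"
proof -
  define S where "S = X * transpose_mat Y + Y * transpose_mat X"
  define w where "w = transpose_mat Y *\<^sub>v u 0"
  have u0: "u 0 \<in> carrier_vec n" by (simp add: u_carrier_le_r)
  have S: "S \<in> carrier_mat n n" using X_carrier Y unfolding S_def by simp
  have w: "w \<in> carrier_vec r" using Y u0 unfolding w_def by simp
  have v: "v \<in> carrier_vec n" using X_carrier w unfolding v_def w_def[symmetric] by simp
  have Xtv: "transpose_mat X *\<^sub>v v \<in> carrier_vec r" using X_carrier v by simp
  have "S *\<^sub>v u 0 = v"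
    using X_carrier Y u0 unfolding S_def v_def
    by (simp add: add_mult_transpose_mult_vec[of _ n r] transpose_X_mult_u0 mult_mat_vec_zero)
  moreover have "u 0 \<bullet> (S *\<^sub>v v) = v \<bullet> v"
  proof -
    have "u 0 \<bullet> (S *\<^sub>v v) = u 0 \<bullet> (X *\<^sub>v (transpose_mat Y *\<^sub>v v)) + u 0 \<bullet> (Y *\<^sub>v (transpose_mat X *\<^sub>v v))"
      using X_carrier Y u0 v unfolding S_def
      by (simp add: add_mult_transpose_mult_vec[of _ n r] scalar_prod_add_distrib[of _ n])
    also have "\<dots> = w \<bullet> (transpose_mat X *\<^sub>v v)"
      using Y v u0 transpose_vec_mult_scalar[OF Y Xtv u0]
      by (simp add: u0_scalar_prod_X_mult_vec w_def)
    also have "\<dots> = v \<bullet> v"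
      using transpose_vec_mult_scalar[OF X_carrier w v] comm_scalar_prod[OF w Xtv]
      unfolding v_def w_def by simp
    finally show ?thesis .
  qed
  ultimately show ?thesis
    using S u0 v unfolding S_def[symmetric]
    by (simp add: vecm_add[of _ n n] scalar_prod_add_distrib[of _ "n*n"] comm_scalar_prod[of "vecm S" "n*n"]
        scalar_prod_vecm_outer_prod[of _ n _ n])
qed

lemma curvature_bound:
  assumes Y: "Y \<in> carrier_mat n r"
  shows "2 * \<kappa> * ((transpose_mat Y *\<^sub>v u 0) \<bullet> (transpose_mat Y *\<^sub>v u 0))
    \<le> vecm (X * transpose_mat Y + Y * transpose_mat X) \<bullet> (H *\<^sub>v vecm (X * transpose_mat Y + Y * transpose_mat X))"
proof -
  define w where "w = transpose_mat Y *\<^sub>v u 0"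
  define v where "v = X *\<^sub>v w"
  define s where "s = vecm (X * transpose_mat Y + Y * transpose_mat X)"
  define p where "p = vecm (outer_prod (u 0) v + outer_prod v (u 0))"
  have u0: "u 0 \<in> carrier_vec n" by (simp add: u_carrier_le_r)
  have w: "w \<in> carrier_vec r" using Y u0 unfolding w_def by simp
  have v: "v \<in> carrier_vec n" using X_carrier w unfolding v_def by simp
  have s: "s \<in> carrier_vec (n*n)" using X_carrier Y unfolding s_def by simp
  have p: "p \<in> carrier_vec (n*n)" using u0 v unfolding p_def by simp
  have sp: "s \<bullet> p = 2 * (v \<bullet> v)"
    using sym_prod_scalar_prod_sym_outer_prod[OF Y] unfolding s_def p_def v_def w_def .
  have pp: "p \<bullet> p = 2 * (v \<bullet> v)"
    using scalar_prod_vecm_sym_outer_prod_self[OF u0 v] u_orthonormal_le_r[of 0 0]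
      u0_scalar_prod_X_mult_vec[OF w] unfolding p_def v_def by simp
  have "2 * \<kappa> * (v \<bullet> v) = 2 * \<kappa> * (s \<bullet> p) - \<kappa> * (p \<bullet> p)"
    unfolding sp pp by simp
  also have "\<dots> \<le> s \<bullet> (H *\<^sub>v s)"
    using H_mult_sym_outer_prod_X[OF w] psd_if_loewner_le_one[OF H_carrier H_lower]
    unfolding p_def[symmetric] v_def[symmetric]
    by (intro quadratic_form_ge_eigenvector[OF H_carrier H_sym _ s p])
  finally have "2 * \<kappa> * (v \<bullet> v) \<le> s \<bullet> (H *\<^sub>v s)" .
  moreover have "2 * \<kappa> * (w \<bullet> w) \<le> 2 * \<kappa> * (v \<bullet> v)"
    using norm_le_X_mult_vec[OF w] kappa_nonneg unfolding v_def by (simp add: mult_left_mono)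
  ultimately show ?thesis unfolding s_def w_def by linarith
qed

lemma second_order_quadratic_form:
  assumes Y: "Y \<in> carrier_mat n r"
  shows "vecm Y \<bullet> ((kron (2 \<cdot>\<^sub>m 1\<^sub>m r) ((- (1 - \<delta>) * \<kappa>) \<cdot>\<^sub>m outer_prod (u 0) (u 0))
            + transpose_mat J * ((1 - \<delta>) \<cdot>\<^sub>m H) * J) *\<^sub>v vecm Y)
    = (1 - \<delta>) * (vecm (X * transpose_mat Y + Y * transpose_mat X)
          \<bullet> (H *\<^sub>v vecm (X * transpose_mat Y + Y * transpose_mat X))
        - 2 * \<kappa> * ((transpose_mat Y *\<^sub>v u 0) \<bullet> (transpose_mat Y *\<^sub>v u 0)))"
proof -
  define K where "K = kron (2 \<cdot>\<^sub>m 1\<^sub>m r) ((- (1 - \<delta>) * \<kappa>) \<cdot>\<^sub>m outer_prod (u 0) (u 0))"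
  define L where "L = transpose_mat J * ((1 - \<delta>) \<cdot>\<^sub>m H) * J"
  define s where "s = vecm (X * transpose_mat Y + Y * transpose_mat X)"
  have u0: "u 0 \<in> carrier_vec n" by (simp add: u_carrier_le_r)
  have x: "vecm Y \<in> carrier_vec (n*r)" using Y by simp
  have s: "s \<in> carrier_vec (n*n)" using X_carrier Y unfolding s_def by simp
  have K: "K \<in> carrier_mat (n*r) (n*r)"
    using u0 unfolding K_def kron_def by (simp add: mult.commute)
  have L: "L \<in> carrier_mat (n*r) (n*r)"
    using J_carrier H_carrier unfolding L_def by (auto intro!: mult_carrier_mat)
  have "vecm Y \<bullet> (K *\<^sub>v vecm Y)
      = - 2 * (1 - \<delta>) * \<kappa> * ((transpose_mat Y *\<^sub>v u 0) \<bullet> (transpose_mat Y *\<^sub>v u 0))"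
    using quadratic_form_kron_outer_prod[OF u0 Y] unfolding K_def by simp
  moreover have "vecm Y \<bullet> (L *\<^sub>v vecm Y) = (1 - \<delta>) * (s \<bullet> (H *\<^sub>v s))"
    using quadratic_form_congruence[OF J_carrier _ x, of "(1 - \<delta>) \<cdot>\<^sub>m H"] H_carrier s
    unfolding L_def J_prop[OF Y] s_def[symmetric]
    by (simp add: smult_mat_mult_vec[OF H_carrier])
  moreover have "vecm Y \<bullet> ((K + L) *\<^sub>v vecm Y) = vecm Y \<bullet> (K *\<^sub>v vecm Y) + vecm Y \<bullet> (L *\<^sub>v vecm Y)"
    using K L x by (simp add: add_mult_distrib_mat_vec[OF K L x] scalar_prod_add_distrib[of _ "n*r"])
  ultimately show ?thesis
    unfolding K_def[symmetric] L_def[symmetric] s_def[symmetric] by (simp add: algebra_simps)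
qed

lemma second_order_condition:
  "psd (kron (2 \<cdot>\<^sub>m 1\<^sub>m r)
          (matv n n (((1 - \<delta>) \<cdot>\<^sub>m H) *\<^sub>v vecm (X * transpose_mat X - Z * transpose_mat Z)))
        + transpose_mat J * ((1 - \<delta>) \<cdot>\<^sub>m H) * J)"
proof -
  define M where "M = kron (2 \<cdot>\<^sub>m 1\<^sub>m r) ((- (1 - \<delta>) * \<kappa>) \<cdot>\<^sub>m outer_prod (u 0) (u 0))
    + transpose_mat J * ((1 - \<delta>) \<cdot>\<^sub>m H) * J"
  have u0: "u 0 \<in> carrier_vec n" by (simp add: u_carrier_le_r)
  have M: "M \<in> carrier_mat (n*r) (n*r)"
    using u0 J_carrier H_carrier unfolding M_def kron_def
    by (auto simp: mult.commute intro!: mult_carrier_mat)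
  have "0 \<le> x \<bullet> (M *\<^sub>v x)" if x: "x \<in> carrier_vec (n*r)" for x
  proof -
    have Y: "matv n r x \<in> carrier_mat n r" by simp
    show ?thesis
      using second_order_quadratic_form[OF Y] curvature_bound[OF Y] one_minus_delta_pos
      unfolding vecm_matv[OF x] M_def[symmetric] by simp
  qed
  moreover have "kron (2 \<cdot>\<^sub>m 1\<^sub>m r)
          (matv n n (((1 - \<delta>) \<cdot>\<^sub>m H) *\<^sub>v vecm (X * transpose_mat X - Z * transpose_mat Z)))
        + transpose_mat J * ((1 - \<delta>) \<cdot>\<^sub>m H) * J = M"
    unfolding M_def scaled_H_mult_residual using u0
    by (simp only: matv_vecm smult_carrier_mat outer_prod_carrier)
  ultimately show ?thesis
    using M unfolding psd_def by simp
qed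

lemma loewner_lower_bound:
  "loewner_le ((1 - \<delta>) \<cdot>\<^sub>m 1\<^sub>m (n*n)) ((1 - \<delta>) \<cdot>\<^sub>m H)"
  using loewner_le_smult[OF one_carrier_mat H_carrier H_lower] one_minus_delta_pos by simp

lemma loewner_upper_bound:
  "loewner_le ((1 - \<delta>) \<cdot>\<^sub>m H) ((1 + \<delta>) \<cdot>\<^sub>m 1\<^sub>m (n*n))"
proof -
  have "(1 + \<delta>) \<cdot>\<^sub>m 1\<^sub>m (n*n) = (1 - \<delta>) \<cdot>\<^sub>m (\<kappa> \<cdot>\<^sub>m 1\<^sub>m (n*n))"
    unfolding one_plus_delta by (intro eq_matI) auto
  then show ?thesis
    using loewner_le_smult[OF H_carrier _ H_upper] one_minus_delta_pos by simp
qed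

end

theorem lemma26:
  fixes n r rs :: nat
    and u :: "nat \<Rightarrow> real vec"
    and H J X Z :: "real mat"
    and q :: nat and \<kappa> \<xi> \<delta> :: real
  assumes rs_ge: "1 \<le> rs" and rs_le: "rs \<le> r" and r_lt: "r < n"
    and u_carrier: "\<And>i. i < n \<Longrightarrow> u i \<in> carrier_vec n"
    and u_orthonormal: "\<And>i j. i < n \<Longrightarrow> j < n \<Longrightarrow> u i \<bullet> u j = (if i = j then 1 else 0)"
    and q_def: "q = r - rs + 1"
    and kappa_def: "\<kappa> = 1 + 2 * sqrt (real q)"
    and H_carrier: "H \<in> carrier_mat (n*n) (n*n)"
    and H_sym: "transpose_mat H = H"
    and H_lower: "loewner_le (1\<^sub>m (n*n)) H"
    and H_upper: "loewner_le H (\<kappa> \<cdot>\<^sub>m 1\<^sub>m (n*n))"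
    and H_eig1: "H *\<^sub>v vecm (mat n n (\<lambda>(i,j). sqrt (real q) * (u 0 $ i * u 0 $ j)
                   + (\<Sum>k=1..q. u k $ i * u k $ j)))
               = \<kappa> \<cdot>\<^sub>v vecm (mat n n (\<lambda>(i,j). sqrt (real q) * (u 0 $ i * u 0 $ j)
                   + (\<Sum>k=1..q. u k $ i * u k $ j)))"
    and H_eig2: "H *\<^sub>v vecm (mat n n (\<lambda>(i,j). sqrt (real q) * (u 0 $ i * u 0 $ j)
                   - (\<Sum>k=1..q. u k $ i * u k $ j)))
               = vecm (mat n n (\<lambda>(i,j). sqrt (real q) * (u 0 $ i * u 0 $ j)
                   - (\<Sum>k=1..q. u k $ i * u k $ j)))"
    and H_eig3: "\<And>k. 1 \<le> k \<Longrightarrow> k \<le> r \<Longrightarrow>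
               H *\<^sub>v vecm (mat n n (\<lambda>(i,j). u 0 $ i * u k $ j + u k $ i * u 0 $ j))
               = \<kappa> \<cdot>\<^sub>v vecm (mat n n (\<lambda>(i,j). u 0 $ i * u k $ j + u k $ i * u 0 $ j))"
    and xi_def: "\<xi> = sqrt (1 + sqrt (real q))"
    and delta_def: "\<delta> = 1 / (1 + 1 / sqrt (real q))"
    and Z_def: "Z = mat n rs (\<lambda>(i,j). \<xi> * (if j = 0 then u 0 $ i else u (q + j) $ i))"
    and X_def: "X = mat n r (\<lambda>(i,j). (if j < q then 1 else \<xi>) * u (j + 1) $ i)"
    and J_carrier: "J \<in> carrier_mat (n*n) (n*r)"
    and J_prop: "\<And>Y. Y \<in> carrier_mat n r \<Longrightarrow>
               J *\<^sub>v vecm Y = vecm (X * transpose_mat Y + Y * transpose_mat X)"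
  shows "transpose_mat J *\<^sub>v (((1 - \<delta>) \<cdot>\<^sub>m H) *\<^sub>v vecm (X * transpose_mat X - Z * transpose_mat Z))
           = 0\<^sub>v (n*r)
       \<and> psd (kron (2 \<cdot>\<^sub>m 1\<^sub>m r)
                   (matv n n (((1 - \<delta>) \<cdot>\<^sub>m H) *\<^sub>v vecm (X * transpose_mat X - Z * transpose_mat Z)))
              + transpose_mat J * ((1 - \<delta>) \<cdot>\<^sub>m H) * J)
       \<and> loewner_le ((1 - \<delta>) \<cdot>\<^sub>m 1\<^sub>m (n*n)) ((1 - \<delta>) \<cdot>\<^sub>m H)
       \<and> loewner_le ((1 - \<delta>) \<cdot>\<^sub>m H) ((1 + \<delta>) \<cdot>\<^sub>m 1\<^sub>m (n*n))"
proof -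
  interpret delta_ub_example n r rs u H J X Z q \<kappa> \<xi> \<delta>
    by (rule delta_ub_example.intro) (fact assms)+
  show ?thesis
    using first_order_condition second_order_condition loewner_lower_bound loewner_upper_bound
    by blast
qed

end
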